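(* Let $n\geq 2$ be an integer and $V$ a $\mathbb{Q}[\operatorname{SL}_2(\mathbb{Z})]$-module of length $\leq n$. Suppose that for all $k = 1,\dots, n$ one has in $\operatorname{End} V$: \[\frac{1}{(n-k)!}\,w x^{n-k} w x^{n-1} = \frac{(-1)^{n-k}}{(k-1)!}\, x^{k-1} w x^{n-1}.\] Then $V$ has a $\mathbb{Q}[\operatorname{SL}_2(\mathbb{Z})]$-submodule $V_\top$ such that $V/V_\top$ has length $\leq n-1$, and $V_\top \simeq \bigoplus_I \mathbb{Q}\otimes_\mathbb{Z}\operatorname{Sym}^{n-1} \operatorname{Nat} \operatorname{SL}_2(\mathbb{Z})$ as $\mathbb{Q}[\operatorname{SL}_2(\mathbb{Z})]$-modules, for some index set $I$.
   Context: Let $u = \begin{pmatrix}1 & 1 \\ 0 & 1\end{pmatrix}$ and $w = \begin{pmatrix}0 & 1 \\ -1 & 0 \end{pmatrix}$ in $\operatorname{SL}_2(\mathbb{Z})$. The length of an $\operatorname{SL}_2(\mathbb{Z})$-module $V$ is the least $k$ with $(u-1)^k\cdot V = 0$. For a $\mathbb{Q}[\operatorname{SL}_2(\mathbb{Z})]$-module of finite length, $x = \log u = \sum_{k \geq 1} (-1)^{k+1}\frac{(u-1)^k}{k}\in\operatorname{End} V$ (a finite sum). $\mathbb{Q}\otimes_\mathbb{Z}\operatorname{Sym}^{n-1}\operatorname{Nat}\operatorname{SL}_2(\mathbb{Z})$ is the $\mathbb{Q}$-space of homogeneous polynomials of degree $n-1$ in $X,Y$ with the substitution action of $\operatorname{SL}_2(\mathbb{Z})\le\operatorname{SL}_2(\mathbb{Q})$.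 *)

theory Defs
  imports "HOL-Analysis.Analysis"
begin

definition SL2Z :: "(int^2^2) set" where
  "SL2Z = {A. det A = 1}"

text \<open>u = [[1,1],[0,1]] and w = [[0,1],[-1,0]]; entry A $ i $ j is row i, column j.\<close>
definition mat_u :: "int^2^2" where
  "mat_u = (\<chi> i j. if i = j then 1 else if i = 1 \<and> j = 2 then 1 else 0)"

definition mat_w :: "int^2^2" where
  "mat_w = (\<chi> i j. if i = 1 \<and> j = 2 then 1 else if i = 2 \<and> j = 1 then -1 else 0)"

definition sl2_rep :: "(rat \<Rightarrow> 'v::ab_group_add \<Rightarrow> 'v) \<Rightarrow> (int^2^2 \<Rightarrow> 'v \<Rightarrow> 'v) \<Rightarrow> bool" where
  "sl2_rep smul rho \<longleftrightarrow>
     vector_space smul \<and>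
     (\<forall>A\<in>SL2Z. Vector_Spaces.linear smul smul (rho A)) \<and>
     rho (mat 1) = id \<and>
     (\<forall>A\<in>SL2Z. \<forall>B\<in>SL2Z. rho (A ** B) = rho A \<circ> rho B)"

definition u_minus_1 :: "(int^2^2 \<Rightarrow> 'v \<Rightarrow> 'v) \<Rightarrow> 'v \<Rightarrow> 'v::ab_group_add" where
  "u_minus_1 rho = (\<lambda>v. rho mat_u v - v)"

definition rep_length :: "(int^2^2 \<Rightarrow> 'v::ab_group_add \<Rightarrow> 'v) \<Rightarrow> nat" where
  "rep_length (rho :: int^2^2 \<Rightarrow> 'v::ab_group_add \<Rightarrow> 'v) = (LEAST k. \<forall>v. (u_minus_1 rho ^^ k) v = 0)"

text \<open>x = log u = sum_{k>=1} (-1)^(k+1) (u-1)^k / k, a finite sum (terms with k > length vanish).\<close>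
definition log_u :: "(rat \<Rightarrow> 'v \<Rightarrow> 'v) \<Rightarrow> (int^2^2 \<Rightarrow> 'v \<Rightarrow> 'v) \<Rightarrow> 'v \<Rightarrow> 'v::ab_group_add" where
  "log_u smul rho = (\<lambda>v. \<Sum>k\<in>{1..rep_length rho}.
      smul ((-1) ^ (k + 1) / of_nat k) ((u_minus_1 rho ^^ k) v))"

definition sl2_submodule :: "(rat \<Rightarrow> 'v \<Rightarrow> 'v) \<Rightarrow> (int^2^2 \<Rightarrow> 'v \<Rightarrow> 'v) \<Rightarrow> 'v::ab_group_add set \<Rightarrow> bool" where
  "sl2_submodule smul rho S \<longleftrightarrow>
     module.subspace smul S \<and> (\<forall>A\<in>SL2Z. \<forall>v\<in>S. rho A v \<in> S)"

text \<open>Q (x) Sym^d Nat: homogeneous polynomials of degree d in X, Y over Q, represented by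
  their polynomial functions Q^2 -> Q (faithful since Q is infinite).\<close>
definition hom_poly :: "nat \<Rightarrow> (rat \<times> rat \<Rightarrow> rat) set" where
  "hom_poly d = {f. \<exists>c :: nat \<Rightarrow> rat. \<forall>x y. f (x, y) = (\<Sum>i\<le>d. c i * x ^ i * y ^ (d - i))}"

definition subst_act :: "int^2^2 \<Rightarrow> (rat \<times> rat \<Rightarrow> rat) \<Rightarrow> (rat \<times> rat \<Rightarrow> rat)" where
  "subst_act g P = (\<lambda>(x, y). P (of_int (g$1$1) * x + of_int (g$2$1) * y,
                              of_int (g$1$2) * x + of_int (g$2$2) * y))"

definition dsum_sym :: "nat \<Rightarrow> 'i set \<Rightarrow> ('i \<Rightarrow> rat \<times> rat \<Rightarrow> rat) set" where
  "dsum_sym d I = {F. (\<forall>i. F i \<in> hom_poly d) \<and> (\<forall>i. i \<notin> I \<longrightarrow> F i = (\<lambda>_. 0))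
                      \<and> finite {i. F i \<noteq> (\<lambda>_. 0)}}"

definition iso_to_dsum_sym ::
  "(rat \<Rightarrow> 'v \<Rightarrow> 'v) \<Rightarrow> (int^2^2 \<Rightarrow> 'v \<Rightarrow> 'v) \<Rightarrow> 'v::ab_group_add set \<Rightarrow> nat \<Rightarrow> 'i set
     \<Rightarrow> ('v \<Rightarrow> 'i \<Rightarrow> rat \<times> rat \<Rightarrow> rat) \<Rightarrow> bool" where
  "iso_to_dsum_sym smul rho S d I \<phi> \<longleftrightarrow>
     bij_betw \<phi> S (dsum_sym d I) \<and>
     (\<forall>v\<in>S. \<forall>v'\<in>S. \<phi> (v + v') = (\<lambda>i p. \<phi> v i p + \<phi> v' i p)) \<and>
     (\<forall>c. \<forall>v\<in>S. \<phi> (smul c v) = (\<lambda>i p. c * \<phi> v i p)) \<and>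
     (\<forall>A\<in>SL2Z. \<forall>v\<in>S. \<phi> (rho A v) = (\<lambda>i. subst_act A (\<phi> v i)))"

end

theory Submission
  imports Defs "HOL-Computational_Algebra.Formal_Power_Series" "HOL-Computational_Algebra.Polynomial"
begin

text \<open>Let \<open>d = n - 1\<close> and let \<open>B\<close> be a basis of the image of \<open>x\<^sup>d\<close>. Since \<open>u - 1\<close> is a power
  series in \<open>x\<close> with invertible quotient by \<open>x\<close>, the image of \<open>(u - 1)\<^sup>d\<close> lies in the span of \<open>B\<close>.
  For \<open>b \<in> B\<close> the vectors \<open>x\<^sup>i w b\<close> (\<open>i \<le> d\<close>) span a copy of \<open>Sym\<^sup>d\<close>: \<open>u = exp x\<close> acts on
  them like the substitution \<open>Y \<mapsto> X + Y\<close>, and the hypothesis says exactly that \<open>w\<close> acts like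
  \<open>(X, Y) \<mapsto> (-Y, X)\<close>; as \<open>u\<close> and \<open>w\<close> generate \<open>SL\<^sub>2(\<int>)\<close>, this is an isomorphism of modules.
  The sum of these copies is direct because \<open>x\<^sup>d w b = d! w\<^sup>2 b\<close>, \<open>w\<close> is invertible and \<open>B\<close> is
  independent, and it contains \<open>B = w\<^sup>4 B\<close>.\<close>

section \<open>Generators of \<open>SL\<^sub>2(\<int>)\<close>\<close>

lemma matrix_mult_2_nth:
  "((A::'a::comm_ring_1^2^2) ** B) $ i $ j = A$i$1 * B$1$j + A$i$2 * B$2$j"
  by (simp add: matrix_matrix_mult_def sum_2)

lemma mat2_eqI:
  "(A::'a^2^2)$1$1 = B$1$1 \<Longrightarrow> A$1$2 = B$1$2 \<Longrightarrow> A$2$1 = B$2$1 \<Longrightarrow> A$2$2 = B$2$2 \<Longrightarrow> A = B"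
  by (simp add: vec_eq_iff forall_2)

lemma mat_u_nth [simp]: "mat_u$1$1 = 1" "mat_u$1$2 = 1" "mat_u$2$1 = 0" "mat_u$2$2 = 1"
  by (simp_all add: mat_u_def)

lemma mat_w_nth [simp]: "mat_w$1$1 = 0" "mat_w$1$2 = 1" "mat_w$2$1 = -1" "mat_w$2$2 = 0"
  by (simp_all add: mat_w_def)

lemma mat_1_nth [simp]:
  "(mat 1::int^2^2)$1$1 = 1" "(mat 1::int^2^2)$1$2 = 0" "(mat 1::int^2^2)$2$1 = 0" "(mat 1::int^2^2)$2$2 = 1"
  by (simp_all add: mat_def)

definition shear :: "int \<Rightarrow> int^2^2" where
  "shear q = (\<chi> i j. if i = j then 1 else if i = 1 \<and> j = 2 then q else 0)"

lemma shear_nth [simp]: "shear q$1$1 = 1" "shear q$1$2 = q" "shear q$2$1 = 0" "shear q$2$2 = 1"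
  by (simp_all add: shear_def)

lemma SL2Z_iff: "A \<in> SL2Z \<longleftrightarrow> A$1$1 * A$2$2 - A$1$2 * A$2$1 = 1"
  by (simp add: SL2Z_def det_2)

lemma SL2Z_mult: "A \<in> SL2Z \<Longrightarrow> B \<in> SL2Z \<Longrightarrow> A ** B \<in> SL2Z"
  by (simp add: SL2Z_def det_mul)

lemma mat_u_SL2Z: "mat_u \<in> SL2Z" and mat_w_SL2Z: "mat_w \<in> SL2Z" and mat_1_SL2Z: "mat 1 \<in> SL2Z"
  by (simp_all add: SL2Z_iff)

inductive uw_generated :: "int^2^2 \<Rightarrow> bool" where
  one: "uw_generated (mat 1)"
| u: "uw_generated A \<Longrightarrow> uw_generated (mat_u ** A)"
| w: "uw_generated A \<Longrightarrow> uw_generated (mat_w ** A)"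

lemma uw_generated_mult: "uw_generated A \<Longrightarrow> uw_generated B \<Longrightarrow> uw_generated (A ** B)"
  by (induction A rule: uw_generated.induct)
    (auto simp flip: matrix_mul_assoc intro: uw_generated.intros)

lemma uw_generated_SL2Z: "uw_generated A \<Longrightarrow> A \<in> SL2Z"
  by (induction rule: uw_generated.induct) (auto intro: SL2Z_mult mat_u_SL2Z mat_w_SL2Z mat_1_SL2Z)

lemma uw_generated_shear: "uw_generated (shear q)"
proof (induction q rule: int_induct[where k = 0])
  case base
  have "shear 0 = mat 1" by (rule mat2_eqI) simp_all
  then show ?case by (simp add: uw_generated.one)
next
  case (step1 q)
  have "shear (q + 1) = mat_u ** shear q" by (rule mat2_eqI) (simp_all add: matrix_mult_2_nth)
  then show ?case using step1 by (simp add: uw_generated.u)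
next
  case (step2 q)
  have "shear (q - 1) = mat_w ** (mat_u ** (mat_w ** (mat_u ** (mat_w ** shear q))))"
    by (rule mat2_eqI) (simp_all add: matrix_mult_2_nth)
  then show ?case using step2 by (simp add: uw_generated.intros)
qed

text \<open>Euclid's algorithm: left multiplication by \<open>w u\<^sup>-\<^sup>q\<close>, \<open>q = a div c\<close>, replaces the lower left
  entry \<open>c\<close> by \<open>-(a mod c)\<close>, where \<open>a\<close> is the upper left entry.\<close>
lemma SL2Z_uw_generated: "A \<in> SL2Z \<Longrightarrow> uw_generated A"
proof (induction "nat \<bar>A$2$1\<bar>" arbitrary: A rule: less_induct)
  case (less A)
  then have det: "A$1$1 * A$2$2 - A$1$2 * A$2$1 = 1" by (simp add: SL2Z_iff)
  show ?case
  proof (cases "A$2$1 = 0")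
    case True
    then have "A$1$1 * A$2$2 = 1" using det by simp
    then consider "A$1$1 = 1" "A$2$2 = 1" | "A$1$1 = -1" "A$2$2 = -1"
      using zmult_eq_1_iff by blast
    then show ?thesis
    proof cases
      case 1
      have "A = shear (A$1$2)" by (rule mat2_eqI) (use 1 True in simp_all)
      then show ?thesis by (metis uw_generated_shear)
    next
      case 2
      have "A = mat_w ** (mat_w ** shear (- A$1$2))"
        by (rule mat2_eqI) (use 2 True in \<open>simp_all add: matrix_mult_2_nth\<close>)
      then show ?thesis by (metis uw_generated.w uw_generated_shear)
    qed
  next
    case False
    define q where "q = A$1$1 div A$2$1"
    define A' where "A' = mat_w ** (shear (- q) ** A)"
    have "A'$2$1 = - (A$1$1 mod A$2$1)"
      by (simp add: A'_def q_def matrix_mult_2_nth minus_div_mult_eq_mod[symmetric] algebra_simps)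
    moreover have "\<bar>A$1$1 mod A$2$1\<bar> < \<bar>A$2$1\<bar>"
      using False by (rule abs_mod_less)
    moreover have "A' \<in> SL2Z" using less.prems
      by (simp add: A'_def SL2Z_iff matrix_mult_2_nth algebra_simps det)
    ultimately have "uw_generated A'" by (intro less.hyps) auto
    moreover have "A = shear q ** (mat_w ** (mat_w ** (mat_w ** A')))"
      unfolding A'_def by (rule mat2_eqI) (simp_all add: matrix_mult_2_nth algebra_simps)
    ultimately show ?thesis by (metis uw_generated_mult uw_generated.w uw_generated_shear)
  qed
qed

lemma SL2Z_induct [consumes 1, case_names one u w]:
  assumes "A \<in> SL2Z" and "P (mat 1)"
    and "\<And>A. A \<in> SL2Z \<Longrightarrow> P A \<Longrightarrow> P (mat_u ** A)"
    and "\<And>A. A \<in> SL2Z \<Longrightarrow> P A \<Longrightarrow> P (mat_w ** A)"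
  shows "P A"
  using SL2Z_uw_generated[OF assms(1)]
  by (induction rule: uw_generated.induct) (use assms(2-4) uw_generated_SL2Z in blast)+

section \<open>The power series \<open>log (1 + X)\<close>\<close>

definition ln1p_div_X :: "'a::field_char_0 fps" where
  "ln1p_div_X = Abs_fps (\<lambda>k. (-1)^k / of_nat (Suc k))"

lemma fps_ln_1_eq: "fps_ln 1 = fps_X * ln1p_div_X"
  by (intro fps_ext) (auto simp: fps_ln_nth ln1p_div_X_def)

lemma fps_nth_ln_power_less: "m < k \<Longrightarrow> fps_nth (fps_ln (1::'a::field_char_0) ^ k) m = 0"
  by (simp add: fps_ln_1_eq power_mult_distrib fps_X_power_mult_nth)

lemma fps_exp_compose_ln: "fps_exp 1 oo fps_ln (1::'a::field_char_0) = 1 + fps_X"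
proof -
  have "(fps_exp (1::'a) - 1) oo fps_inv (fps_exp 1 - 1) = fps_X"
    by (rule fps_inv_right) simp_all
  then have "(fps_exp 1 oo fps_ln (1::'a)) - 1 = fps_X"
    by (simp add: fps_ln_fps_exp_inv fps_compose_sub_distrib)
  then show ?thesis by (simp add: algebra_simps)
qed

lemma fps_nth_exp_ln_partial_sum:
  assumes "m < n"
  shows "fps_nth (\<Sum>k<n. fps_const (1 / fact k) * fps_ln (1::'a::field_char_0) ^ k) m = fps_nth (1 + fps_X) m"
proof -
  have "fps_nth (\<Sum>k<n. fps_const (1 / fact k) * fps_ln (1::'a) ^ k) m
      = (\<Sum>k\<in>{0..m}. 1 / fact k * fps_nth (fps_ln 1 ^ k) m)"
    unfolding fps_sum_nth fps_mult_left_const_nth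
    by (rule sum.mono_neutral_right) (use assms in \<open>auto simp: fps_nth_ln_power_less not_le\<close>)
  also have "\<dots> = fps_nth (fps_exp 1 oo fps_ln (1::'a)) m"
    by (simp add: fps_compose_nth)
  finally show ?thesis by (simp add: fps_exp_compose_ln)
qed

lemma fps_X_power_eq_ln_power: "fps_X ^ k = fps_ln (1::'a::field_char_0) ^ k * inverse ln1p_div_X ^ k"
proof -
  have "ln1p_div_X * inverse ln1p_div_X = (1::'a fps)"
    by (rule inverse_mult_eq_1') (simp add: ln1p_div_X_def)
  then have "fps_ln 1 * inverse ln1p_div_X = (fps_X::'a fps)"
    by (simp add: fps_ln_1_eq mult.assoc)
  then show ?thesis by (metis power_mult_distrib)
qed

section \<open>Substituting \<open>u - 1\<close> into power series\<close>

lemma module_hom_funpow: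
  assumes "module_hom s s f"
  shows "module_hom s s (f ^^ k)"
proof (induction k)
  case 0
  have "module s" using assms by (simp add: module_hom_iff)
  then show ?case by (simp add: module.module_hom_ident)
next
  case (Suc k)
  then show ?case using module_hom_compose[OF Suc assms] by (simp add: comp_def)
qed

locale unipotent_sl2_rep = vector_space smul for smul :: "rat \<Rightarrow> 'v::ab_group_add \<Rightarrow> 'v" +
  fixes rho :: "int^2^2 \<Rightarrow> 'v \<Rightarrow> 'v" and n :: nat
  assumes two_le_n: "2 \<le> n"
    and sl2_rep: "sl2_rep smul rho"
    and nilpotent: "\<And>v. (u_minus_1 rho ^^ n) v = 0"
begin

sublocale endo: module_pair smul smul ..

abbreviation lin :: "('v \<Rightarrow> 'v) \<Rightarrow> bool" where
  "lin \<equiv> module_hom smul smul"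

abbreviation N :: "'v \<Rightarrow> 'v" where "N \<equiv> u_minus_1 rho"
abbreviation X :: "'v \<Rightarrow> 'v" where "X \<equiv> log_u smul rho"
abbreviation W :: "'v \<Rightarrow> 'v" where "W \<equiv> rho mat_w"

lemma lin_rho: "A \<in> SL2Z \<Longrightarrow> lin (rho A)"
  using sl2_rep by (simp add: sl2_rep_def module_hom_iff_linear)

lemma rho_mult: "A \<in> SL2Z \<Longrightarrow> B \<in> SL2Z \<Longrightarrow> rho (A ** B) v = rho A (rho B v)"
  using sl2_rep by (simp add: sl2_rep_def)

lemma rho_1: "rho (mat 1) v = v"
  using sl2_rep by (simp add: sl2_rep_def)

lemma lin_N: "lin N"
  unfolding u_minus_1_def
  by (intro endo.module_hom_sub lin_rho[OF mat_u_SL2Z] module.module_hom_ident module_axioms)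

lemma rep_length_le: "rep_length rho \<le> n"
  unfolding rep_length_def using nilpotent by (auto intro: Least_le)

lemma N_power_rep_length: "(N ^^ k) v = 0" if "rep_length rho \<le> k"
proof -
  have "\<forall>v. (N ^^ rep_length rho) v = 0"
    unfolding rep_length_def by (rule LeastI[of _ n]) (simp add: nilpotent)
  then show ?thesis
    using module_hom.zero[OF module_hom_funpow[OF lin_N, of "k - rep_length rho"]] that
    by (metis funpow_add le_add_diff_inverse2 o_apply)
qed

lemma N_power_eq_0: "n \<le> k \<Longrightarrow> (N ^^ k) v = 0"
  using rep_length_le by (intro N_power_rep_length) linarith

definition apply_fps :: "rat fps \<Rightarrow> 'v \<Rightarrow> 'v" where
  "apply_fps f v = (\<Sum>i<n. smul (fps_nth f i) ((N ^^ i) v))"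

lemma lin_apply_fps: "lin (apply_fps f)"
  unfolding apply_fps_def
  by (intro endo.module_hom_sum endo.module_hom_scale module_hom_funpow lin_N) (simp add: module_axioms)

lemma apply_fps_cong: "(\<And>m. m < n \<Longrightarrow> fps_nth f m = fps_nth g m) \<Longrightarrow> apply_fps f v = apply_fps g v"
  by (simp add: apply_fps_def)

lemma apply_fps_add: "apply_fps (f + g) v = apply_fps f v + apply_fps g v"
  by (simp add: apply_fps_def scale_left_distrib sum.distrib)

lemma apply_fps_const_mult: "apply_fps (fps_const c * f) v = smul c (apply_fps f v)"
  by (simp add: apply_fps_def scale_sum_right)

lemma apply_fps_sum: "apply_fps (\<Sum>k\<in>S. f k) v = (\<Sum>k\<in>S. apply_fps (f k) v)"
  by (induction S rule: infinite_finite_induct) (simp_all add: apply_fps_add apply_fps_def[of 0])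

lemma apply_fps_mult: "apply_fps (f * g) v = apply_fps f (apply_fps g v)"
proof -
  define T where "T i j = smul (fps_nth f i * fps_nth g j) ((N ^^ (i + j)) v)" for i j
  have "apply_fps f (apply_fps g v) = (\<Sum>(i, j)\<in>{..<n} \<times> {..<n}. T i j)"
    unfolding apply_fps_def T_def sum.cartesian_product[symmetric]
    by (simp add: module_hom.sum[OF module_hom_funpow[OF lin_N]]
        module_hom.scale[OF module_hom_funpow[OF lin_N]] scale_sum_right funpow_add)
  also have "\<dots> = (\<Sum>(i, j)\<in>{(i, j). i + j < n}. T i j)"
    by (rule sum.mono_neutral_right) (auto simp: T_def, meson N_power_eq_0 not_less)
  also have "\<dots> = (\<Sum>k<n. \<Sum>i\<le>k. T i (k - i))"
    by (rule sum.triangle_reindex)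
  also have "\<dots> = apply_fps (f * g) v"
    unfolding apply_fps_def T_def fps_mult_nth
    by (simp add: scale_sum_left atLeast0AtMost)
  finally show ?thesis ..
qed

lemma apply_fps_1: "apply_fps 1 v = v"
proof -
  have "apply_fps 1 v = (\<Sum>i\<in>{0}. smul (fps_nth 1 i) ((N ^^ i) v))"
    unfolding apply_fps_def by (rule sum.mono_neutral_right) (use two_le_n in auto)
  then show ?thesis by simp
qed

lemma apply_fps_X: "apply_fps fps_X v = N v"
proof -
  have "apply_fps fps_X v = (\<Sum>i\<in>{1}. smul (fps_nth fps_X i) ((N ^^ i) v))"
    unfolding apply_fps_def by (rule sum.mono_neutral_right) (use two_le_n in auto)
  then show ?thesis by simp
qed

lemma apply_fps_ln: "apply_fps (fps_ln 1) v = X v"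
proof -
  define t where "t i = smul (if i = 0 then 0 else (-1)^(i+1) / of_nat i) ((N ^^ i) v)" for i
  have neg_one_power: "(-1::rat)^(i - Suc 0) = - ((-1)^i)" if "0 < i" for i
    using that by (cases i) auto
  have "apply_fps (fps_ln 1) v = (\<Sum>i<n. t i)"
    unfolding apply_fps_def t_def by (intro sum.cong refl) (auto simp: fps_ln_nth neg_one_power)
  also have "\<dots> = (\<Sum>i\<le>n. t i)"
    by (rule sum.mono_neutral_left) (auto simp: t_def N_power_eq_0)
  also have "\<dots> = (\<Sum>i\<in>{1..n}. t i)"
    by (rule sum.mono_neutral_right) (auto simp: t_def)
  also have "\<dots> = (\<Sum>i\<in>{1..rep_length rho}. t i)"
    by (rule sum.mono_neutral_right) (use rep_length_le in \<open>auto simp: t_def N_power_rep_length\<close>)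
  also have "\<dots> = X v"
    unfolding log_u_def t_def by (intro sum.cong refl) auto
  finally show ?thesis .
qed

lemma apply_fps_power:
  assumes "\<And>v. apply_fps f v = g v"
  shows "apply_fps (f ^ k) v = (g ^^ k) v"
  by (induction k arbitrary: v) (simp_all add: apply_fps_1 apply_fps_mult assms funpow_swap1)

lemma lin_X: "lin X"
proof -
  have "apply_fps (fps_ln 1) = X" using apply_fps_ln by blast
  then show ?thesis using lin_apply_fps by metis
qed

lemma X_power_eq_0: "n \<le> k \<Longrightarrow> (X ^^ k) v = 0"
proof -
  assume "n \<le> k"
  then have "apply_fps (fps_ln 1 ^ k) v = apply_fps 0 v"
    by (intro apply_fps_cong) (simp add: fps_nth_ln_power_less)
  then show ?thesis by (simp add: apply_fps_power[OF apply_fps_ln] apply_fps_def[of 0])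
qed

lemma u_eq_exp_X: "rho mat_u v = (\<Sum>k<n. smul (1 / fact k) ((X ^^ k) v))"
proof -
  have "rho mat_u v = apply_fps (1 + fps_X) v"
    by (simp add: apply_fps_add apply_fps_1 apply_fps_X u_minus_1_def)
  also have "\<dots> = apply_fps (\<Sum>k<n. fps_const (1 / fact k) * fps_ln 1 ^ k) v"
    by (rule apply_fps_cong) (simp add: fps_nth_exp_ln_partial_sum)
  also have "\<dots> = (\<Sum>k<n. smul (1 / fact k) ((X ^^ k) v))"
    by (simp add: apply_fps_sum apply_fps_const_mult apply_fps_power[OF apply_fps_ln])
  finally show ?thesis .
qed

lemma N_power_in_range_X_power: "(N ^^ k) v \<in> range (X ^^ k)"
proof -
  have "(N ^^ k) v = apply_fps (fps_ln 1 ^ k * inverse ln1p_div_X ^ k) v"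
    by (simp add: apply_fps_power[OF apply_fps_X] flip: fps_X_power_eq_ln_power)
  also have "\<dots> = (X ^^ k) (apply_fps (inverse ln1p_div_X ^ k) v)"
    by (simp add: apply_fps_mult apply_fps_power[OF apply_fps_ln])
  finally show ?thesis by simp
qed

end

section \<open>Homogeneous polynomials\<close>

definition hom_poly_of :: "nat \<Rightarrow> (nat \<Rightarrow> rat) \<Rightarrow> rat \<times> rat \<Rightarrow> rat" where
  "hom_poly_of d c = (\<lambda>(x, y). \<Sum>i\<le>d. c i * x^i * y^(d - i))"

lemma hom_poly_of_apply: "hom_poly_of d c (x, y) = (\<Sum>i\<le>d. c i * x^i * y^(d - i))"
  by (simp add: hom_poly_of_def)

lemma hom_poly_iff: "p \<in> hom_poly d \<longleftrightarrow> (\<exists>c. p = hom_poly_of d c)"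
  by (auto simp: hom_poly_def hom_poly_of_def fun_eq_iff)

lemma hom_poly_of_in_hom_poly: "hom_poly_of d c \<in> hom_poly d"
  by (auto simp: hom_poly_iff)

lemma hom_poly_of_cong: "(\<And>i. i \<le> d \<Longrightarrow> c i = c' i) \<Longrightarrow> hom_poly_of d c = hom_poly_of d c'"
  by (auto simp: hom_poly_of_def fun_eq_iff intro!: sum.cong)

text \<open>Dehomogenising at \<open>y = 1\<close> gives a univariate polynomial with the same coefficients.\<close>
lemma hom_poly_of_coeff_unique:
  assumes "hom_poly_of d c = hom_poly_of d c'" and "i \<le> d"
  shows "c i = c' i"
proof -
  define q where "q = (\<Sum>j\<le>d. monom (c j - c' j) j)"
  have "poly q x = hom_poly_of d c (x, 1) - hom_poly_of d c' (x, 1)" for x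
    by (simp add: q_def poly_sum poly_monom hom_poly_of_apply algebra_simps sum_subtractf)
  then have "poly q x = 0" for x using assms(1) by simp
  then have "q = 0" using poly_all_0_iff_0 by blast
  then have "coeff q i = 0" by simp
  moreover have "coeff q i = c i - c' i" using assms(2) by (simp add: q_def coeff_sum)
  ultimately show ?thesis by simp
qed

definition hom_poly_coeff :: "nat \<Rightarrow> (rat \<times> rat \<Rightarrow> rat) \<Rightarrow> nat \<Rightarrow> rat" where
  "hom_poly_coeff d p = (SOME c. p = hom_poly_of d c)"

lemma hom_poly_coeff_of: "i \<le> d \<Longrightarrow> hom_poly_coeff d (hom_poly_of d c) i = c i"
  by (metis (mono_tags) hom_poly_coeff_def hom_poly_of_coeff_unique someI)

lemma hom_poly_of_coeff: "p \<in> hom_poly d \<Longrightarrow> hom_poly_of d (hom_poly_coeff d p) = p"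
  unfolding hom_poly_iff hom_poly_coeff_def by (metis (mono_tags) someI)

lemma hom_poly_of_add: "hom_poly_of d (\<lambda>i. c i + c' i) = (\<lambda>z. hom_poly_of d c z + hom_poly_of d c' z)"
  by (auto simp: hom_poly_of_def fun_eq_iff algebra_simps sum.distrib)

lemma hom_poly_of_scale: "hom_poly_of d (\<lambda>i. a * c i) = (\<lambda>z. a * hom_poly_of d c z)"
  by (auto simp: hom_poly_of_def fun_eq_iff algebra_simps sum_distrib_left)

lemma hom_poly_of_0: "hom_poly_of d (\<lambda>i. 0) = (\<lambda>z. 0)"
  by (auto simp: hom_poly_of_def fun_eq_iff)

lemma hom_poly_zero: "(\<lambda>z. 0) \<in> hom_poly d"
  using hom_poly_of_in_hom_poly[of d "\<lambda>i. 0"] by (simp add: hom_poly_of_0)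

lemma hom_poly_add: "p \<in> hom_poly d \<Longrightarrow> q \<in> hom_poly d \<Longrightarrow> (\<lambda>z. p z + q z) \<in> hom_poly d"
  by (auto simp: hom_poly_iff hom_poly_of_add[symmetric])

lemma hom_poly_scale: "p \<in> hom_poly d \<Longrightarrow> (\<lambda>z. a * p z) \<in> hom_poly d"
  by (auto simp: hom_poly_iff hom_poly_of_scale[symmetric])

lemma subst_act_1: "subst_act (mat 1) p = p"
  by (simp add: subst_act_def)

lemma subst_act_mult: "subst_act (A ** B) p = subst_act A (subst_act B p)"
  by (auto simp: subst_act_def matrix_mult_2_nth fun_eq_iff algebra_simps)

lemma subst_act_zero: "subst_act A (\<lambda>z. 0) = (\<lambda>z. 0)"
  by (auto simp: subst_act_def)

lemma monomial_times_binomial_power: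
  assumes "i \<le> d"
  shows "(x::rat)^i * (x + y)^(d - i) =
    (\<Sum>m\<le>d. if i \<le> m then of_nat ((d - i) choose (m - i)) * x^m * y^(d - m) else 0)"
proof -
  have "x^i * (x + y)^(d - i) = (\<Sum>k\<le>d - i. of_nat ((d - i) choose k) * x^(k + i) * y^(d - (k + i)))"
    by (simp add: binomial_ring sum_distrib_left power_add algebra_simps diff_diff_left)
  also have "\<dots> = (\<Sum>m\<in>{i..d}. of_nat ((d - i) choose (m - i)) * x^m * y^(d - m))"
    using sum.shift_bounds_cl_nat_ivl[of "\<lambda>m. of_nat ((d - i) choose (m - i)) * x^m * y^(d - m)" 0 i "d - i"]
    by (simp add: assms atLeast0AtMost)
  also have "\<dots> = (\<Sum>m\<le>d. if i \<le> m then of_nat ((d - i) choose (m - i)) * x^m * y^(d - m) else 0)"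
    by (simp add: sum.If_cases) (rule sum.cong, auto)
  finally show ?thesis .
qed

definition subst_u_coeffs :: "nat \<Rightarrow> (nat \<Rightarrow> rat) \<Rightarrow> nat \<Rightarrow> rat" where
  "subst_u_coeffs d c m = (\<Sum>i\<le>d. if i \<le> m then c i * of_nat ((d - i) choose (m - i)) else 0)"

lemma subst_act_u_hom_poly_of: "subst_act mat_u (hom_poly_of d c) = hom_poly_of d (subst_u_coeffs d c)"
proof -
  have "subst_act mat_u (hom_poly_of d c) (x, y) = hom_poly_of d (subst_u_coeffs d c) (x, y)" for x y
  proof -
    have "subst_act mat_u (hom_poly_of d c) (x, y) = (\<Sum>i\<le>d. c i * (x^i * (x + y)^(d - i)))"
      by (simp add: subst_act_def hom_poly_of_apply mult.assoc)
    also have "\<dots> = (\<Sum>i\<le>d. \<Sum>m\<le>d.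
        if i \<le> m then c i * of_nat ((d - i) choose (m - i)) * x^m * y^(d - m) else 0)"
      by (intro sum.cong refl)
        (simp add: monomial_times_binomial_power sum_distrib_left if_distrib,
          intro sum.cong refl, simp add: mult.assoc)
    also have "\<dots> = (\<Sum>m\<le>d. \<Sum>i\<le>d.
        if i \<le> m then c i * of_nat ((d - i) choose (m - i)) * x^m * y^(d - m) else 0)"
      by (rule sum.swap)
    also have "\<dots> = hom_poly_of d (subst_u_coeffs d c) (x, y)"
      by (simp add: hom_poly_of_apply subst_u_coeffs_def sum_distrib_right) (intro sum.cong refl, simp)
    finally show ?thesis .
  qed
  then show ?thesis by auto
qed

lemma subst_u_coeffs_times_fact:
  assumes "m \<le> d"
  shows "subst_u_coeffs d c m * fact (d - m)
    = (\<Sum>i\<le>d. c i * fact (d - i) * (if i \<le> m then 1 / fact (m - i) else 0))"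
  unfolding subst_u_coeffs_def sum_distrib_right
proof (intro sum.cong refl)
  fix i
  show "(if i \<le> m then c i * of_nat ((d - i) choose (m - i)) else 0) * fact (d - m)
      = c i * fact (d - i) * (if i \<le> m then 1 / fact (m - i) else 0)"
  proof (cases "i \<le> m")
    case True
    then have "of_nat ((d - i) choose (m - i)) = (fact (d - i) / (fact (m - i) * fact (d - m)) :: rat)"
      using assms by (simp add: binomial_fact)
    then show ?thesis using True by (simp add: field_simps)
  qed simp
qed

definition subst_w_coeffs :: "nat \<Rightarrow> (nat \<Rightarrow> rat) \<Rightarrow> nat \<Rightarrow> rat" where
  "subst_w_coeffs d c m = c (d - m) * (-1)^(d - m)"

lemma subst_act_w_hom_poly_of: "subst_act mat_w (hom_poly_of d c) = hom_poly_of d (subst_w_coeffs d c)"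
proof -
  have "subst_act mat_w (hom_poly_of d c) (x, y) = hom_poly_of d (subst_w_coeffs d c) (x, y)" for x y
  proof -
    have "subst_act mat_w (hom_poly_of d c) (x, y) = (\<Sum>i\<le>d. c i * (-y)^i * x^(d - i))"
      by (simp add: subst_act_def hom_poly_of_apply)
    also have "\<dots> = (\<Sum>i\<in>{0..d}. c (d + 0 - i) * (-y)^(d + 0 - i) * x^(d - (d + 0 - i)))"
      by (subst sum.atLeastAtMost_rev) (simp add: atLeast0AtMost)
    also have "\<dots> = hom_poly_of d (subst_w_coeffs d c) (x, y)"
      by (auto simp: hom_poly_of_apply subst_w_coeffs_def atLeast0AtMost power_minus' intro!: sum.cong)
    finally show ?thesis .
  qed
  then show ?thesis by auto
qed

lemma hom_poly_subst_u: "p \<in> hom_poly d \<Longrightarrow> subst_act mat_u p \<in> hom_poly d"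
  by (auto simp: hom_poly_iff subst_act_u_hom_poly_of)

lemma hom_poly_subst_w: "p \<in> hom_poly d \<Longrightarrow> subst_act mat_w p \<in> hom_poly d"
  by (auto simp: hom_poly_iff subst_act_w_hom_poly_of)

section \<open>Copies of \<open>Sym\<^sup>d\<close> inside the module\<close>

locale sl2_rep_top_relations = unipotent_sl2_rep smul rho n
  for smul :: "rat \<Rightarrow> 'v::ab_group_add \<Rightarrow> 'v" and rho n +
  assumes top_relations: "\<forall>k\<in>{1..n}. \<forall>v.
    smul (1 / fact (n - k))
      (rho mat_w ((log_u smul rho ^^ (n - k)) (rho mat_w ((log_u smul rho ^^ (n - 1)) v))))
    = smul ((-1) ^ (n - k) / fact (k - 1))
      ((log_u smul rho ^^ (k - 1)) (rho mat_w ((log_u smul rho ^^ (n - 1)) v)))"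
begin

definition d :: nat where "d = n - 1"

lemma Suc_d: "Suc d = n"
  using two_le_n by (simp add: d_def)

lemma lin_W: "lin W"
  by (rule lin_rho[OF mat_w_SL2Z])

lemma lin_X_power: "lin (X ^^ k)"
  by (rule module_hom_funpow[OF lin_X])

lemma W_power_4: "W (W (W (W v))) = v"
proof -
  have "mat_w ** (mat_w ** (mat_w ** mat_w)) = (mat 1 :: int^2^2)"
    by (rule mat2_eqI) (simp_all add: matrix_mult_2_nth)
  then show ?thesis
    by (metis rho_1 rho_mult mat_w_SL2Z SL2Z_mult)
qed

lemma W_W_eq_0: "W (W v) = 0 \<Longrightarrow> v = 0"
  using W_power_4[of v] module_hom.zero[OF lin_W] by simp

definition sym_basis :: "'v \<Rightarrow> nat \<Rightarrow> 'v" where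
  "sym_basis b i = (X ^^ i) (W b)"

lemma X_power_sym_basis: "(X ^^ k) (sym_basis b i) = sym_basis b (k + i)"
  by (simp add: sym_basis_def funpow_add)

lemma sym_basis_eq_0: "d < i \<Longrightarrow> sym_basis b i = 0"
  using Suc_d by (simp add: sym_basis_def X_power_eq_0)

lemma W_sym_basis:
  assumes "b \<in> range (X ^^ d)" and "i \<le> d"
  shows "W (sym_basis b i) = smul (fact i * (-1)^i / fact (d - i)) (sym_basis b (d - i))"
proof -
  obtain v where b: "b = (X ^^ d) v" using assms(1) by auto
  have "n - i \<in> {1..n}" and "n - (n - i) = i" and "n - i - 1 = d - i" and "n - 1 = d"
    using assms(2) Suc_d by auto
  then have "smul (1 / fact i) (W (sym_basis b i)) = smul ((-1)^i / fact (d - i)) (sym_basis b (d - i))"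
    unfolding sym_basis_def using top_relations b by metis
  then have "smul (fact i) (smul (1 / fact i) (W (sym_basis b i)))
      = smul (fact i) (smul ((-1)^i / fact (d - i)) (sym_basis b (d - i)))"
    by simp
  then show ?thesis by simp
qed

lemma sym_basis_top: "b \<in> range (X ^^ d) \<Longrightarrow> sym_basis b d = smul (fact d) (W (W b))"
  using W_sym_basis[of b 0] by (simp add: sym_basis_def)

lemma u_sym_basis:
  assumes "i \<le> d"
  shows "rho mat_u (sym_basis b i)
    = (\<Sum>m\<le>d. smul (if i \<le> m then 1 / fact (m - i) else 0) (sym_basis b m))"
proof -
  have "rho mat_u (sym_basis b i) = (\<Sum>k<n. smul (1 / fact k) (sym_basis b (k + i)))"
    by (simp add: u_eq_exp_X X_power_sym_basis)
  also have "\<dots> = (\<Sum>k\<in>{0..d - i}. smul (1 / fact k) (sym_basis b (k + i)))"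
    by (rule sum.mono_neutral_right) (use assms Suc_d in \<open>auto simp: sym_basis_eq_0\<close>)
  also have "\<dots> = (\<Sum>m\<in>{i..d}. smul (1 / fact (m - i)) (sym_basis b m))"
    using sum.shift_bounds_cl_nat_ivl[of "\<lambda>m. smul (1 / fact (m - i)) (sym_basis b m)" 0 i "d - i"]
    by (simp add: assms)
  also have "\<dots> = (\<Sum>m\<le>d. smul (if i \<le> m then 1 / fact (m - i) else 0) (sym_basis b m))"
    by (rule sum.mono_neutral_cong_left) auto
  finally show ?thesis .
qed

text \<open>The monomial \<open>X\<^sup>i Y\<^sup>d\<^sup>-\<^sup>i\<close> goes to \<open>(d - i)! x\<^sup>i w b\<close>: with these factorials the
  binomial coefficients of \<open>u\<close> acting on \<open>Sym\<^sup>d\<close> match the exponential series \<open>u = exp x\<close>.\<close>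
definition sym_embed :: "'v \<Rightarrow> (rat \<times> rat \<Rightarrow> rat) \<Rightarrow> 'v" where
  "sym_embed b p = (\<Sum>i\<le>d. smul (hom_poly_coeff d p i * fact (d - i)) (sym_basis b i))"

lemma sym_embed_hom_poly_of:
  "sym_embed b (hom_poly_of d c) = (\<Sum>i\<le>d. smul (c i * fact (d - i)) (sym_basis b i))"
  unfolding sym_embed_def by (intro sum.cong refl) (simp add: hom_poly_coeff_of)

lemma sym_embed_zero: "sym_embed b (\<lambda>z. 0) = 0"
  using sym_embed_hom_poly_of[of b "\<lambda>i. 0"] by (simp add: hom_poly_of_0)

lemma sym_embed_add:
  assumes "p \<in> hom_poly d" and "q \<in> hom_poly d"
  shows "sym_embed b (\<lambda>z. p z + q z) = sym_embed b p + sym_embed b q"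
proof -
  obtain c c' where "p = hom_poly_of d c" "q = hom_poly_of d c'"
    using assms by (auto simp: hom_poly_iff)
  then show ?thesis
    by (simp only: hom_poly_of_add[symmetric] sym_embed_hom_poly_of)
      (simp add: scale_left_distrib sum.distrib algebra_simps)
qed

lemma sym_embed_scale:
  assumes "p \<in> hom_poly d"
  shows "sym_embed b (\<lambda>z. a * p z) = smul a (sym_embed b p)"
proof -
  obtain c where "p = hom_poly_of d c" using assms by (auto simp: hom_poly_iff)
  then show ?thesis
    by (simp only: hom_poly_of_scale[symmetric] sym_embed_hom_poly_of)
      (simp add: scale_sum_right mult.assoc)
qed

lemma sym_embed_u:
  assumes "p \<in> hom_poly d"
  shows "rho mat_u (sym_embed b p) = sym_embed b (subst_act mat_u p)"
proof -
  obtain c where p: "p = hom_poly_of d c" using assms by (auto simp: hom_poly_iff)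
  have "rho mat_u (sym_embed b p) = (\<Sum>i\<le>d. \<Sum>m\<le>d.
      smul (c i * fact (d - i) * (if i \<le> m then 1 / fact (m - i) else 0)) (sym_basis b m))"
    unfolding p sym_embed_hom_poly_of
    by (simp add: module_hom.sum[OF lin_rho[OF mat_u_SL2Z]]
        module_hom.scale[OF lin_rho[OF mat_u_SL2Z]] u_sym_basis scale_sum_right)
  also have "\<dots> = (\<Sum>m\<le>d. \<Sum>i\<le>d.
      smul (c i * fact (d - i) * (if i \<le> m then 1 / fact (m - i) else 0)) (sym_basis b m))"
    by (rule sum.swap)
  also have "\<dots> = (\<Sum>m\<le>d. smul (subst_u_coeffs d c m * fact (d - m)) (sym_basis b m))"
    by (intro sum.cong refl) (simp add: subst_u_coeffs_times_fact scale_sum_left)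
  also have "\<dots> = sym_embed b (subst_act mat_u p)"
    by (simp only: p subst_act_u_hom_poly_of sym_embed_hom_poly_of)
  finally show ?thesis .
qed

lemma sym_embed_w:
  assumes "p \<in> hom_poly d" and b: "b \<in> range (X ^^ d)"
  shows "W (sym_embed b p) = sym_embed b (subst_act mat_w p)"
proof -
  obtain c where p: "p = hom_poly_of d c" using assms by (auto simp: hom_poly_iff)
  have "W (sym_embed b p) = (\<Sum>i\<in>{0..d}. smul (c i * fact i * (-1)^i) (sym_basis b (d - i)))"
    unfolding p sym_embed_hom_poly_of
    by (auto simp: module_hom.sum[OF lin_W] module_hom.scale[OF lin_W]
        atLeast0AtMost W_sym_basis[OF b] intro!: sum.cong)
  also have "\<dots> = (\<Sum>m\<in>{0..d}. smul (subst_w_coeffs d c m * fact (d - m)) (sym_basis b m))"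
    by (subst sum.atLeastAtMost_rev[where n = 0, simplified])
      (auto simp: subst_w_coeffs_def mult_ac intro!: sum.cong)
  also have "\<dots> = sym_embed b (subst_act mat_w p)"
    by (simp only: p subst_act_w_hom_poly_of sym_embed_hom_poly_of atLeast0AtMost)
  finally show ?thesis .
qed

text \<open>Applying \<open>x\<^sup>d\<^sup>-\<^sup>m\<close> kills every monomial of \<open>X\<close>-degree above \<open>m\<close> and moves degree \<open>m\<close>
  to the top vector \<open>x\<^sup>d w b\<close>, which is a nonzero multiple of \<open>w\<^sup>2 b\<close>.\<close>
lemma X_power_sym_embed_lowest:
  assumes b: "b \<in> range (X ^^ d)" and "m \<le> d" and lower: "\<forall>j<m. c j = 0"
  shows "(X ^^ (d - m)) (sym_embed b (hom_poly_of d c)) = smul (c m * fact (d - m) * fact d) (W (W b))"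
proof -
  have "(X ^^ (d - m)) (sym_embed b (hom_poly_of d c))
      = (\<Sum>j\<le>d. smul (c j * fact (d - j)) (sym_basis b (d - m + j)))"
    unfolding sym_embed_hom_poly_of
    by (simp add: module_hom.sum[OF lin_X_power] module_hom.scale[OF lin_X_power]
        X_power_sym_basis add.commute)
  also have "\<dots> = (\<Sum>j\<le>d. if j = m then smul (c m * fact (d - m)) (sym_basis b d) else 0)"
  proof (intro sum.cong refl)
    fix j
    consider "j < m" | "j = m" | "m < j" by linarith
    then show "smul (c j * fact (d - j)) (sym_basis b (d - m + j))
        = (if j = m then smul (c m * fact (d - m)) (sym_basis b d) else 0)"
      by cases (use lower \<open>m \<le> d\<close> in \<open>auto simp: sym_basis_eq_0\<close>)
  qed
  also have "\<dots> = smul (c m * fact (d - m) * fact d) (W (W b))"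
    using \<open>m \<le> d\<close> by (simp add: sym_basis_top[OF b])
  finally show ?thesis .
qed

end

section \<open>The direct sum of the copies\<close>

locale sl2_rep_top_basis = sl2_rep_top_relations smul rho n
  for smul :: "rat \<Rightarrow> 'v::ab_group_add \<Rightarrow> 'v" and rho n +
  fixes B :: "'v set"
  assumes B_subset: "B \<subseteq> range (log_u smul rho ^^ (n - 1))"
    and B_independent: "independent B"
begin

lemma B_subset_range: "b \<in> B \<Longrightarrow> b \<in> range (X ^^ d)"
  using B_subset by (auto simp: d_def)

abbreviation D :: "('v \<Rightarrow> rat \<times> rat \<Rightarrow> rat) set" where
  "D \<equiv> dsum_sym d B"

definition support :: "('v \<Rightarrow> rat \<times> rat \<Rightarrow> rat) \<Rightarrow> 'v set" where
  "support F = {b. F b \<noteq> (\<lambda>z. 0)}"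

definition dsum_embed :: "('v \<Rightarrow> rat \<times> rat \<Rightarrow> rat) \<Rightarrow> 'v" where
  "dsum_embed F = (\<Sum>b\<in>support F. sym_embed b (F b))"

definition dsum_act :: "int^2^2 \<Rightarrow> ('v \<Rightarrow> rat \<times> rat \<Rightarrow> rat) \<Rightarrow> ('v \<Rightarrow> rat \<times> rat \<Rightarrow> rat)" where
  "dsum_act A F = (\<lambda>b. subst_act A (F b))"

lemma D_iff:
  "F \<in> D \<longleftrightarrow> (\<forall>b. F b \<in> hom_poly d) \<and> (\<forall>b. b \<notin> B \<longrightarrow> F b = (\<lambda>z. 0)) \<and> finite (support F)"
  by (simp add: dsum_sym_def support_def)

lemma support_subset_B: "F \<in> D \<Longrightarrow> support F \<subseteq> B"
  by (auto simp: D_iff support_def)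

lemma dsum_embed_eq_sum:
  "F \<in> D \<Longrightarrow> finite T \<Longrightarrow> support F \<subseteq> T \<Longrightarrow> dsum_embed F = (\<Sum>b\<in>T. sym_embed b (F b))"
  unfolding dsum_embed_def by (rule sum.mono_neutral_left) (auto simp: support_def sym_embed_zero)

lemma D_zero: "(\<lambda>b z. 0) \<in> D"
  by (simp add: D_iff hom_poly_zero support_def)

lemma D_add: "F \<in> D \<Longrightarrow> G \<in> D \<Longrightarrow> (\<lambda>b z. F b z + G b z) \<in> D"
proof -
  assume F: "F \<in> D" and G: "G \<in> D"
  have "support (\<lambda>b z. F b z + G b z) \<subseteq> support F \<union> support G"
    by (auto simp: support_def)
  then show ?thesis using F G by (auto simp: D_iff hom_poly_add intro: finite_subset)
qed

lemma D_scale: "F \<in> D \<Longrightarrow> (\<lambda>b z. a * F b z) \<in> D"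
proof -
  assume F: "F \<in> D"
  have "support (\<lambda>b z. a * F b z) \<subseteq> support F" by (auto simp: support_def)
  then show ?thesis using F by (auto simp: D_iff hom_poly_scale intro: finite_subset)
qed

lemma dsum_embed_zero: "dsum_embed (\<lambda>b z. 0) = 0"
  by (simp add: dsum_embed_def support_def)

lemma dsum_embed_add:
  assumes F: "F \<in> D" and G: "G \<in> D"
  shows "dsum_embed (\<lambda>b z. F b z + G b z) = dsum_embed F + dsum_embed G"
proof -
  define T where "T = support F \<union> support G"
  have T: "finite T" using F G by (simp add: T_def D_iff)
  have "dsum_embed (\<lambda>b z. F b z + G b z) = (\<Sum>b\<in>T. sym_embed b (\<lambda>z. F b z + G b z))"
    by (rule dsum_embed_eq_sum[OF D_add[OF F G] T]) (auto simp: T_def support_def)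
  also have "\<dots> = (\<Sum>b\<in>T. sym_embed b (F b)) + (\<Sum>b\<in>T. sym_embed b (G b))"
    using F G by (simp add: D_iff sym_embed_add sum.distrib)
  also have "\<dots> = dsum_embed F + dsum_embed G"
    using dsum_embed_eq_sum[OF F T] dsum_embed_eq_sum[OF G T] by (simp add: T_def)
  finally show ?thesis .
qed

lemma dsum_embed_scale:
  assumes F: "F \<in> D"
  shows "dsum_embed (\<lambda>b z. a * F b z) = smul a (dsum_embed F)"
proof -
  have T: "finite (support F)" using F by (simp add: D_iff)
  have "dsum_embed (\<lambda>b z. a * F b z) = (\<Sum>b\<in>support F. sym_embed b (\<lambda>z. a * F b z))"
    by (rule dsum_embed_eq_sum[OF D_scale[OF F] T]) (auto simp: support_def)
  also have "\<dots> = smul a (dsum_embed F)"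
    using F by (simp add: D_iff sym_embed_scale dsum_embed_def scale_sum_right)
  finally show ?thesis .
qed

lemma dsum_act_mult: "dsum_act (A ** A') F = dsum_act A (dsum_act A' F)"
  by (simp add: dsum_act_def subst_act_mult)

lemma dsum_embed_generator:
  assumes M: "M \<in> SL2Z"
    and hom: "\<And>p. p \<in> hom_poly d \<Longrightarrow> subst_act M p \<in> hom_poly d"
    and embed: "\<And>b p. b \<in> B \<Longrightarrow> p \<in> hom_poly d \<Longrightarrow> rho M (sym_embed b p) = sym_embed b (subst_act M p)"
    and F: "F \<in> D"
  shows "dsum_act M F \<in> D" and "rho M (dsum_embed F) = dsum_embed (dsum_act M F)"
proof -
  have support: "support (dsum_act M F) \<subseteq> support F"
    by (auto simp: support_def dsum_act_def subst_act_zero)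
  show MF: "dsum_act M F \<in> D"
    using F support by (auto simp: D_iff dsum_act_def hom subst_act_zero intro: finite_subset)
  have "rho M (dsum_embed F) = (\<Sum>b\<in>support F. rho M (sym_embed b (F b)))"
    by (simp add: dsum_embed_def module_hom.sum[OF lin_rho[OF M]])
  also have "\<dots> = (\<Sum>b\<in>support F. sym_embed b (dsum_act M F b))"
    using F support_subset_B[OF F] by (intro sum.cong refl) (auto simp: dsum_act_def D_iff embed)
  also have "\<dots> = dsum_embed (dsum_act M F)"
    using F by (intro dsum_embed_eq_sum[OF MF, symmetric] support) (simp add: D_iff)
  finally show "rho M (dsum_embed F) = dsum_embed (dsum_act M F)" .
qed

lemma dsum_embed_equivariant:
  assumes "A \<in> SL2Z" and "F \<in> D"
  shows "dsum_act A F \<in> D \<and> rho A (dsum_embed F) = dsum_embed (dsum_act A F)"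
  using assms
proof (induction arbitrary: F rule: SL2Z_induct)
  case one
  then show ?case by (simp add: dsum_act_def subst_act_1 rho_1)
next
  case (u A)
  then show ?case
    using dsum_embed_generator[OF mat_u_SL2Z hom_poly_subst_u sym_embed_u, of "dsum_act A F"]
    by (simp add: dsum_act_mult rho_mult mat_u_SL2Z)
next
  case (w A)
  then show ?case
    using dsum_embed_generator[OF mat_w_SL2Z hom_poly_subst_w sym_embed_w, of "dsum_act A F"]
    by (simp add: dsum_act_mult rho_mult mat_w_SL2Z B_subset_range)
qed

end


context sl2_rep_top_basis
begin

lemma dsum_embed_eq_0:
  assumes F: "F \<in> D" and zero: "dsum_embed F = 0"
  shows "F = (\<lambda>b z. 0)"
proof -
  define S where "S = support F"
  define c where "c b = hom_poly_coeff d (F b)" for b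
  have S: "finite S" "S \<subseteq> B" using F support_subset_B[OF F] by (auto simp: S_def D_iff)
  have F_eq: "F b = hom_poly_of d (c b)" for b
    using F by (simp add: D_iff c_def hom_poly_of_coeff)
  have coeff_0: "m \<le> d \<longrightarrow> (\<forall>b\<in>S. c b m = 0)" for m
  proof (induction m rule: less_induct)
    case (less m)
    show ?case
    proof
      assume m: "m \<le> d"
      define a where "a b = c b m * fact (d - m) * fact d" for b
      have "0 = (X ^^ (d - m)) (dsum_embed F)"
        using zero module_hom.zero[OF lin_X_power] by simp
      also have "\<dots> = (\<Sum>b\<in>S. smul (a b) (W (W b)))"
        unfolding dsum_embed_def S_def[symmetric] module_hom.sum[OF lin_X_power] F_eq a_def
        by (intro sum.cong refl X_power_sym_embed_lowest B_subset_range) (use less m S in auto)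
      also have "\<dots> = W (W (\<Sum>b\<in>S. smul (a b) b))"
        by (simp add: module_hom.sum[OF lin_W] module_hom.scale[OF lin_W])
      finally have "(\<Sum>b\<in>S. smul (a b) b) = 0" using W_W_eq_0 by metis
      then have "\<forall>b\<in>S. a b = 0" using independentD[OF B_independent S(1,2)] by blast
      then show "\<forall>b\<in>S. c b m = 0" by (simp add: a_def)
    qed
  qed
  have "F b = (\<lambda>z. 0)" for b
  proof (cases "b \<in> S")
    case True
    then have "F b = hom_poly_of d (\<lambda>i. 0)"
      unfolding F_eq by (intro hom_poly_of_cong) (use coeff_0 in auto)
    then show ?thesis by (simp add: hom_poly_of_0)
  qed (simp add: S_def support_def)
  then show ?thesis by auto
qed

lemma inj_on_dsum_embed: "inj_on dsum_embed D"
proof (rule inj_onI)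
  fix F G assume F: "F \<in> D" and G: "G \<in> D" and eq: "dsum_embed F = dsum_embed G"
  have G': "(\<lambda>b z. -1 * G b z) \<in> D" by (rule D_scale[OF G])
  have "dsum_embed (\<lambda>b z. F b z + -1 * G b z) = 0"
    using dsum_embed_add[OF F G'] dsum_embed_scale[OF G, of "-1"] eq by simp
  then have "(\<lambda>b z. F b z + -1 * G b z) = (\<lambda>b z. 0)"
    by (rule dsum_embed_eq_0[OF D_add[OF F G']])
  then show "F = G" by (simp add: fun_eq_iff)
qed

definition top_submodule :: "'v set" where
  "top_submodule = dsum_embed ` D"

lemma subspace_top_submodule: "subspace top_submodule"
  unfolding top_submodule_def
proof (rule subspaceI)
  show "0 \<in> dsum_embed ` D"
    using D_zero by (metis dsum_embed_zero imageI)
next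
  fix v v' assume "v \<in> dsum_embed ` D" "v' \<in> dsum_embed ` D"
  then obtain F G where FG: "F \<in> D" "G \<in> D" and "v = dsum_embed F" "v' = dsum_embed G"
    by auto
  then have "v + v' = dsum_embed (\<lambda>b z. F b z + G b z)" by (simp add: dsum_embed_add)
  then show "v + v' \<in> dsum_embed ` D" using D_add[OF FG] by blast
next
  fix a v assume "v \<in> dsum_embed ` D"
  then obtain F where F: "F \<in> D" and "v = dsum_embed F" by auto
  then have "smul a v = dsum_embed (\<lambda>b z. a * F b z)" by (simp add: dsum_embed_scale)
  then show "smul a v \<in> dsum_embed ` D" using D_scale[OF F] by blast
qed

lemma rho_top_submodule: "A \<in> SL2Z \<Longrightarrow> v \<in> top_submodule \<Longrightarrow> rho A v \<in> top_submodule"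
  unfolding top_submodule_def by (auto dest: dsum_embed_equivariant)

text \<open>\<open>b = w\<^sup>2 (x\<^sup>d w b / d!)\<close> since \<open>w\<^sup>4 = 1\<close>, and \<open>x\<^sup>d w b\<close> is the image of the monomial \<open>X\<^sup>d\<close>.\<close>
lemma B_subset_top_submodule: "B \<subseteq> top_submodule"
proof
  fix b assume b: "b \<in> B"
  define F where "F b' = (if b' = b then hom_poly_of d (\<lambda>i. if i = d then 1 else 0) else (\<lambda>z. 0))" for b'
  have support: "support F \<subseteq> {b}" by (auto simp: support_def F_def)
  then have F: "F \<in> D"
    using b by (auto simp: D_iff F_def hom_poly_of_in_hom_poly hom_poly_zero intro: finite_subset)
  have "dsum_embed F = sym_embed b (F b)"
    using dsum_embed_eq_sum[OF F _ support] by simp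
  also have "\<dots> = (\<Sum>i\<le>d. smul ((if i = d then 1 else 0) * fact (d - i)) (sym_basis b i))"
    unfolding F_def by (simp only: simp_thms if_True sym_embed_hom_poly_of)
  also have "\<dots> = (\<Sum>i\<le>d. if i = d then sym_basis b i else 0)"
    by (intro sum.cong refl) simp
  also have "\<dots> = sym_basis b d"
    by simp
  also have "\<dots> = smul (fact d) (W (W b))"
    by (rule sym_basis_top[OF B_subset_range[OF b]])
  finally have "W (W (smul (1 / fact d) (dsum_embed F))) = b"
    using W_power_4[of b] by (simp add: module_hom.scale[OF lin_W])
  moreover have "dsum_embed F \<in> top_submodule" using F by (simp add: top_submodule_def)
  ultimately show "b \<in> top_submodule"
    using rho_top_submodule[OF mat_w_SL2Z] subspace_scale[OF subspace_top_submodule] by metis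
qed

lemma N_power_d_in_top_submodule:
  assumes "range (X ^^ d) \<subseteq> span B"
  shows "(N ^^ d) v \<in> top_submodule"
proof -
  have "span B \<subseteq> top_submodule"
    by (intro span_minimal B_subset_top_submodule subspace_top_submodule)
  then show ?thesis using N_power_in_range_X_power assms by blast
qed

lemma iso_top_submodule:
  "iso_to_dsum_sym smul rho top_submodule d B (the_inv_into D dsum_embed)"
proof -
  let ?\<phi> = "the_inv_into D dsum_embed"
  have inv: "?\<phi> (dsum_embed F) = F" if "F \<in> D" for F
    using inj_on_dsum_embed that by (rule the_inv_into_f_f)
  have "bij_betw dsum_embed D top_submodule"
    using inj_on_dsum_embed by (simp add: bij_betw_def top_submodule_def)
  then have "bij_betw ?\<phi> top_submodule D" by (rule bij_betw_the_inv_into)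
  moreover have "?\<phi> (v + v') = (\<lambda>b p. ?\<phi> v b p + ?\<phi> v' b p)"
    if "v \<in> top_submodule" "v' \<in> top_submodule" for v v'
    using that by (auto simp: top_submodule_def inv D_add simp flip: dsum_embed_add)
  moreover have "?\<phi> (smul a v) = (\<lambda>b p. a * ?\<phi> v b p)" if "v \<in> top_submodule" for a v
    using that by (auto simp: top_submodule_def inv D_scale simp flip: dsum_embed_scale)
  moreover have "?\<phi> (rho A v) = (\<lambda>b. subst_act A (?\<phi> v b))"
    if "A \<in> SL2Z" "v \<in> top_submodule" for A v
    using that by (auto simp: top_submodule_def inv dsum_act_def dest: dsum_embed_equivariant)
  ultimately show ?thesis by (simp add: iso_to_dsum_sym_def)
qed

end

theorem lemma1:
  fixes smul :: "rat \<Rightarrow> 'v::ab_group_add \<Rightarrow> 'v"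
    and rho :: "int^2^2 \<Rightarrow> 'v \<Rightarrow> 'v"
    and n :: nat
  assumes "n \<ge> 2"
    and "sl2_rep smul rho"
    and "\<forall>v. (u_minus_1 rho ^^ n) v = 0"
    and "\<forall>k\<in>{1..n}. \<forall>v.
           smul (1 / fact (n - k))
             (rho mat_w ((log_u smul rho ^^ (n - k)) (rho mat_w ((log_u smul rho ^^ (n - 1)) v))))
         = smul ((-1) ^ (n - k) / fact (k - 1))
             ((log_u smul rho ^^ (k - 1)) (rho mat_w ((log_u smul rho ^^ (n - 1)) v)))"
  shows "\<exists>Vtop. sl2_submodule smul rho Vtop \<and>
           (\<forall>v. (u_minus_1 rho ^^ (n - 1)) v \<in> Vtop) \<and>
           (\<exists>(I :: 'v set) \<phi>. iso_to_dsum_sym smul rho Vtop (n - 1) I \<phi>)"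
proof -
  interpret sl2_rep_top_relations smul rho n
    using assms by (simp add: sl2_rep_top_relations_def sl2_rep_top_relations_axioms_def
        unipotent_sl2_rep_def unipotent_sl2_rep_axioms_def sl2_rep_def)
  obtain B where B: "B \<subseteq> range (X ^^ d)" "independent B" "range (X ^^ d) \<subseteq> span B"
    by (rule maximal_independent_subset)
  interpret sl2_rep_top_basis smul rho n B
    using B by unfold_locales (simp_all add: d_def)
  have "sl2_submodule smul rho top_submodule"
    using subspace_top_submodule rho_top_submodule by (simp add: sl2_submodule_def)
  moreover have "\<forall>v. (N ^^ d) v \<in> top_submodule"
    using N_power_d_in_top_submodule[OF B(3)] by blast
  ultimately show ?thesis
    using iso_top_submodule unfolding d_def by blast
qed

end
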